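(* Let $A$ be a finite set, $\bot,\dagger\notin A$ distinct extra symbols, $N\geq1$, and let $\mathsf L$, $p_x=p(-|x)$, $\pi$, $T(\bot)$ and the generalized metric space $\mathcal M$ be as in the context. Then for every $t>0$, $$\operatorname{Mag}(t\mathcal M)=(t-1)\sum_{x\in\mathsf L\setminus T(\bot)}H_t(p_x)+\#T(\bot),$$ where $H_t(p)=\frac{1}{t-1}\bigl(1-\sum_i p_i^t\bigr)$ is the Tsallis $t$-entropy (for $t=1$, $H_1$ is the Shannon entropy, so the first term vanishes).
   Context: $A^*$ is the set of finite strings over $A$, $|x|$ denotes length (with $\bot,\dagger$ counted). $\mathsf L=\{\bot a : a\in A^*,\ |a|\leq N-1\}\sqcup\{\bot a\dagger : a\in A^*,\ |a|<N-1\}$, partially ordered by the prefix relation ($x\leq y$ iff $y=xa'$ for some string $a'$). Strings $\bot a$ are unfinished texts, $\bot a\dagger$ finished texts. For each unfinished text $x\in\mathsf L$ with $|x|\leq N-1$ a probability mass function $p_x=p(-|x)$ on $A\cup\{\dagger\}$ is given. Define $\pi(y|x)=1$ if $x=y$; $0$ if $x\not\leq y$; and if $x=\bot a_1\cdots a_t$ is a proper prefix of $y=xa_{t+1}\cdots a_{t+k}$, $\pi(y|x)=\prod_{i=1}^k p(a_{t+i}\mid\bot a_1\cdots a_{t+i-1})$. $T(\bot)$ is the set of elements of $\mathsf L$ that are either unfinished texts of length $N$ or finished texts (so $\mathsf L\setminus T(\bot)$ is the set of unfinished texts of length $\leq N-1$). $\mathcal M$ is the generalized metric space with point set $\mathsf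 L$ and $d(x,y)=-\ln\pi(y|x)\in[0,\infty]$. For $t>0$, $t\mathcal M$ has distances $t\,d$, and its magnitude is $\operatorname{Mag}(t\mathcal M)=\sum_{x,y\in\mathsf L}\zeta_t^{-1}(x,y)$, where $\zeta_t$ is the (invertible) matrix $\zeta_t(x,y)=e^{-t d(x,y)}=\pi(y|x)^t$ with $e^{-\infty}=0$. *)

theory Defs
  imports Complex_Main "HOL-Library.Extended_Real" "HOL-Library.Sublist"
begin

text \<open>Symbols: the start symbol (bot), letters from the alphabet, and the end symbol (dagger).
  Bot and Dag are distinct and not letters by construction.\<close>
datatype 'a sym = Bot | Sym 'a | Dag

text \<open>The poset L of texts (as lists of symbols, length counts Bot and Dag).\<close>
definition unfinished_texts :: "'a set \<Rightarrow> nat \<Rightarrow> 'a sym list set" where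
  "unfinished_texts A N = {Bot # map Sym a | a. a \<in> lists A \<and> length a \<le> N - 1}"

definition finished_texts :: "'a set \<Rightarrow> nat \<Rightarrow> 'a sym list set" where
  "finished_texts A N = {Bot # map Sym a @ [Dag] | a. a \<in> lists A \<and> length a < N - 1}"

definition texts :: "'a set \<Rightarrow> nat \<Rightarrow> 'a sym list set" where
  "texts A N = unfinished_texts A N \<union> finished_texts A N"

definition Tbot :: "'a set \<Rightarrow> nat \<Rightarrow> 'a sym list set" where
  "Tbot A N = {x \<in> unfinished_texts A N. length x = N} \<union> finished_texts A N"

text \<open>Transition probabilities pi(y|x), with p x s = p(s|x). Argument order: piT p y x = pi(y|x).\<close>
definition piT :: "('a sym list \<Rightarrow> 'a sym \<Rightarrow> real) \<Rightarrow> 'a sym list \<Rightarrow> 'a sym list \<Rightarrow> real" where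
  "piT p y x = (if x = y then 1
     else if \<not> prefix x y then 0
     else (\<Prod>i\<in>{length x..<length y}. p (take i y) (y ! i)))"

definition dist_text :: "('a sym list \<Rightarrow> 'a sym \<Rightarrow> real) \<Rightarrow> 'a sym list \<Rightarrow> 'a sym list \<Rightarrow> ereal" where
  "dist_text p x y = (if piT p y x = 0 then \<infinity> else ereal (- ln (piT p y x)))"

definition zeta_t :: "('a sym list \<Rightarrow> 'a sym \<Rightarrow> real) \<Rightarrow> real \<Rightarrow> 'a sym list \<Rightarrow> 'a sym list \<Rightarrow> real" where
  "zeta_t p t x y = (if dist_text p x y = \<infinity> then 0 else exp (- t * real_of_ereal (dist_text p x y)))"

text \<open>Matrices indexed by a finite set S, as functions; M is a two-sided inverse of Z on S
  (and vanishes off S, to make it unique).\<close>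
definition inverse_on :: "'b set \<Rightarrow> ('b \<Rightarrow> 'b \<Rightarrow> real) \<Rightarrow> ('b \<Rightarrow> 'b \<Rightarrow> real) \<Rightarrow> bool" where
  "inverse_on S Z M \<longleftrightarrow>
     (\<forall>x\<in>S. \<forall>z\<in>S. (\<Sum>y\<in>S. Z x y * M y z) = (if x = z then 1 else 0)
                 \<and> (\<Sum>y\<in>S. M x y * Z y z) = (if x = z then 1 else 0))
     \<and> (\<forall>x y. x \<notin> S \<or> y \<notin> S \<longrightarrow> M x y = 0)"

definition mat_inverse_on :: "'b set \<Rightarrow> ('b \<Rightarrow> 'b \<Rightarrow> real) \<Rightarrow> 'b \<Rightarrow> 'b \<Rightarrow> real" where
  "mat_inverse_on S Z = (THE M. inverse_on S Z M)"

definition magnitude :: "'b set \<Rightarrow> ('b \<Rightarrow> 'b \<Rightarrow> real) \<Rightarrow> real" where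
  "magnitude S Z = (\<Sum>x\<in>S. \<Sum>y\<in>S. mat_inverse_on S Z x y)"

definition tsallis :: "real \<Rightarrow> 'b set \<Rightarrow> ('b \<Rightarrow> real) \<Rightarrow> real" where
  "tsallis t S q = (if t = 1 then - (\<Sum>i\<in>S. q i * ln (q i))
                    else (1 - (\<Sum>i\<in>S. q i powr t)) / (t - 1))"

end

theory Submission
  imports Defs
begin

text \<open>
  The similarity matrix \<open>\<zeta>\<^sub>t(x, y) = \<pi>(y|x)\<^sup>t\<close> vanishes unless \<open>x\<close> is a prefix of \<open>y\<close>, and it is
  multiplicative along chains: \<open>\<zeta>(x, z) = \<zeta>(x, y) \<zeta>(y, z)\<close> for \<open>x \<le> y \<le> z\<close>.  Since the prefix
  order on \<open>L\<close> is a tree, a strict interval \<open>x < z\<close> contains exactly one child of \<open>x\<close> and exactly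
  one parent of \<open>z\<close>; hence the matrix \<open>\<mu>(x, y) = \<delta>(x, y) - [y is a child of x] \<zeta>(x, y)\<close> is a
  two-sided inverse of \<open>\<zeta>\<close>.  Summing \<open>\<mu>\<close> row by row, a leaf (an element of \<open>T(\<bottom>)\<close>) contributes
  \<open>1\<close> and an inner node \<open>x\<close> contributes \<open>1 - \<Sum>\<^sub>s p(s|x)\<^sup>t = (t - 1) H\<^sub>t(p\<^sub>x)\<close>.
\<close>

lemma inverse_on_unique:
  assumes "finite S" "inverse_on S Z M" "inverse_on S Z M'"
  shows "M = M'"
proof (intro ext)
  fix x z
  show "M x z = M' x z"
  proof (cases "x \<in> S \<and> z \<in> S")
    case False
    then show ?thesis using assms(2,3) unfolding inverse_on_def by auto
  next
    case True
    have "M x z = (\<Sum>y\<in>S. M x y * (if y = z then 1 else 0))"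
      using True assms(1) by (simp add: if_distrib cong: if_cong)
    also have "\<dots> = (\<Sum>y\<in>S. M x y * (\<Sum>w\<in>S. Z y w * M' w z))"
      using True assms(3) unfolding inverse_on_def by (intro sum.cong) auto
    also have "\<dots> = (\<Sum>w\<in>S. (\<Sum>y\<in>S. M x y * Z y w) * M' w z)"
      unfolding sum_distrib_left sum_distrib_right mult.assoc by (rule sum.swap)
    also have "\<dots> = (\<Sum>w\<in>S. (if x = w then 1 else 0) * M' w z)"
      using True assms(2) unfolding inverse_on_def by (intro sum.cong) auto
    also have "\<dots> = M' x z"
      using True assms(1) by (simp add: if_distrib[where f="\<lambda>c. c * _"] sum.delta cong: if_cong)
    finally show ?thesis .
  qed
qed

lemma mat_inverse_on_eqI:
  assumes "finite S" "inverse_on S Z M"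
  shows "mat_inverse_on S Z = M"
  unfolding mat_inverse_on_def using assms inverse_on_unique by blast

definition children :: "'b list set \<Rightarrow> 'b list \<Rightarrow> 'b list set" where
  "children S x = {y \<in> S. \<exists>s. y = x @ [s]}"

lemma self_notin_children [simp]: "x \<notin> children S x"
  by (simp add: children_def)

locale prefix_zeta =
  fixes S :: "'b list set" and Z :: "'b list \<Rightarrow> 'b list \<Rightarrow> real"
  assumes finite_S: "finite S"
    and prefix_convex: "\<lbrakk>x \<in> S; z \<in> S; prefix x y; prefix y z\<rbrakk> \<Longrightarrow> y \<in> S"
    and Z_refl: "x \<in> S \<Longrightarrow> Z x x = 1"
    and Z_not_prefix: "\<lbrakk>x \<in> S; z \<in> S; \<not> prefix x z\<rbrakk> \<Longrightarrow> Z x z = 0"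
    and Z_trans: "\<lbrakk>x \<in> S; y \<in> S; z \<in> S; prefix x y; prefix y z\<rbrakk> \<Longrightarrow> Z x z = Z x y * Z y z"
begin

definition mobius :: "'b list \<Rightarrow> 'b list \<Rightarrow> real" where
  "mobius x y = (if x \<in> S \<and> y \<in> S
     then (if y = x then 1 else 0) - (if y \<in> children S x then Z x y else 0) else 0)"

lemma sum_children_chain:
  assumes "x \<in> S" "z \<in> S"
  shows "(\<Sum>y\<in>children S x. Z x y * Z y z) = (if strict_prefix x z then Z x z else 0)"
proof -
  have "(\<Sum>y\<in>children S x. Z x y * Z y z) = (\<Sum>y\<in>children S x \<inter> {y. prefix y z}. Z x y * Z y z)"
    using finite_S Z_not_prefix[OF _ assms(2)]
    by (intro sum.mono_neutral_right) (auto simp: children_def)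
  also have "\<dots> = (if strict_prefix x z then Z x z else 0)"
  proof (cases "strict_prefix x z")
    case True
    then obtain s zs where z: "z = x @ s # zs"
      by (rule strict_prefixE')
    have c: "x @ [s] \<in> S" using prefix_convex[OF assms(1,2)] z by (simp add: prefix_def)
    then have "children S x \<inter> {y. prefix y z} = {x @ [s]}"
      using z by (auto simp: children_def)
    then show ?thesis using Z_trans[OF assms(1) c assms(2)] True z by (simp add: prefix_def)
  next
    case False
    then have "children S x \<inter> {y. prefix y z} = {}"
      by (auto simp: children_def dest: prefix_snocD)
    then show ?thesis using False by simp
  qed
  finally show ?thesis .
qed

lemma sum_parents_chain:
  assumes "x \<in> S" "z \<in> S"
  shows "(\<Sum>y\<in>{y \<in> S. z \<in> children S y}. Z x y * Z y z) = (if strict_prefix x z then Z x z else 0)"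
proof (cases z rule: rev_exhaust)
  case Nil
  then show ?thesis by (simp add: children_def)
next
  case (snoc w s)
  have parents: "{y \<in> S. z \<in> children S y} = S \<inter> {w}"
    using snoc assms(2) by (auto simp: children_def)
  show ?thesis
  proof (cases "prefix x w")
    case True
    then have "strict_prefix x z"
      using snoc prefix_length_le by (fastforce simp: strict_prefix_def)
    moreover have "w \<in> S" using prefix_convex[OF assms] True snoc by simp
    ultimately show ?thesis using parents Z_trans[OF assms(1) _ assms(2) True] snoc by simp
  next
    case False
    then have "\<not> strict_prefix x z" using snoc by (auto simp: strict_prefix_def)
    moreover have "(\<Sum>y\<in>S \<inter> {w}. Z x y * Z y z) = 0"
      using Z_not_prefix[OF assms(1) _ False] by (cases "w \<in> S") auto
    ultimately show ?thesis using parents by simp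
  qed
qed

lemma Z_minus_strict_prefix:
  assumes "x \<in> S" "z \<in> S"
  shows "Z x z - (if strict_prefix x z then Z x z else 0) = (if x = z then 1 else 0)"
  using assms Z_refl Z_not_prefix by (auto simp: strict_prefix_def)

lemma inverse_on_mobius: "inverse_on S Z mobius"
  unfolding inverse_on_def
proof (intro conjI ballI allI impI)
  fix x z assume xz: "x \<in> S" "z \<in> S"
  have "(\<Sum>y\<in>S. Z x y * mobius y z)
      = (\<Sum>y\<in>S. (if y = z then Z x y else 0) - (if z \<in> children S y then Z x y * Z y z else 0))"
    using xz by (intro sum.cong) (auto simp: mobius_def)
  also have "\<dots> = Z x z - (\<Sum>y\<in>{y \<in> S. z \<in> children S y}. Z x y * Z y z)"
    using finite_S xz by (simp add: sum_subtractf sum.inter_filter)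
  finally show "(\<Sum>y\<in>S. Z x y * mobius y z) = (if x = z then 1 else 0)"
    using sum_parents_chain[OF xz] Z_minus_strict_prefix[OF xz] by simp
  have "(\<Sum>y\<in>S. mobius x y * Z y z)
      = (\<Sum>y\<in>S. (if y = x then Z y z else 0) - (if y \<in> children S x then Z x y * Z y z else 0))"
    using xz by (intro sum.cong) (auto simp: mobius_def)
  also have "\<dots> = Z x z - (\<Sum>y\<in>children S x. Z x y * Z y z)"
    using finite_S xz by (simp add: sum_subtractf sum.inter_filter children_def)
  finally show "(\<Sum>y\<in>S. mobius x y * Z y z) = (if x = z then 1 else 0)"
    using sum_children_chain[OF xz] Z_minus_strict_prefix[OF xz] by simp
next
  fix x y assume "x \<notin> S \<or> y \<notin> S"
  then show "mobius x y = 0" by (auto simp: mobius_def)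
qed

lemma magnitude_eq: "magnitude S Z = (\<Sum>x\<in>S. 1 - (\<Sum>y\<in>children S x. Z x y))"
proof -
  have "(\<Sum>y\<in>S. mobius x y) = 1 - (\<Sum>y\<in>children S x. Z x y)" if "x \<in> S" for x
  proof -
    have "(\<Sum>y\<in>S. mobius x y) = (\<Sum>y\<in>S. (if y = x then 1 else 0) - (if y \<in> children S x then Z x y else 0))"
      using that by (intro sum.cong) (auto simp: mobius_def)
    also have "\<dots> = 1 - (\<Sum>y\<in>children S x. Z x y)"
      using that finite_S by (simp add: sum_subtractf sum.inter_filter children_def)
    finally show ?thesis .
  qed
  then show ?thesis
    unfolding magnitude_def mat_inverse_on_eqI[OF finite_S inverse_on_mobius] by simp
qed

end

lemma texts_cases:
  assumes "z \<in> texts A N"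
  obtains a where "set a \<subseteq> A" "length a \<le> N - 1" "z = Bot # map Sym a"
  | a where "set a \<subseteq> A" "length a < N - 1" "z = Bot # map Sym a @ [Dag]"
  using assms unfolding texts_def unfinished_texts_def finished_texts_def lists_eq_set by blast

lemma texts_nonempty: "z \<in> texts A N \<Longrightarrow> z \<noteq> []"
  by (erule texts_cases) auto

lemma finite_texts: "finite A \<Longrightarrow> finite (texts A N)"
proof -
  assume "finite A"
  then have "finite {a. set a \<subseteq> A \<and> length a \<le> N - 1}"
    by (rule finite_lists_length_le)
  moreover have "{a. set a \<subseteq> A \<and> length a < N - 1} \<subseteq> {a. set a \<subseteq> A \<and> length a \<le> N - 1}"
    by auto
  ultimately show ?thesis
    unfolding texts_def unfinished_texts_def finished_texts_def lists_eq_set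
    by (simp add: setcompr_eq_image finite_subset)
qed

definition inner_texts :: "'a set \<Rightarrow> nat \<Rightarrow> 'a sym list set" where
  "inner_texts A N = {x \<in> unfinished_texts A N. length x \<le> N - 1}"

lemma inner_texts_iff:
  "x \<in> inner_texts A N \<longleftrightarrow> (\<exists>a. set a \<subseteq> A \<and> length a < N - 1 \<and> x = Bot # map Sym a)"
  unfolding inner_texts_def unfinished_texts_def lists_eq_set by auto

lemma take_in_inner_texts:
  assumes "z \<in> texts A N" "0 < i" "i < length z"
  shows "take i z \<in> inner_texts A N \<and> z ! i \<in> Sym ` A \<union> {Dag}"
proof -
  obtain j where i: "i = Suc j" using assms(2) by (cases i) auto
  from assms(1) show ?thesis
  proof (cases rule: texts_cases)
    case (1 a)
    then have "j < length a" using assms(3) i by simp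
    moreover have "a ! j \<in> A" using 1 calculation nth_mem by blast
    ultimately show ?thesis
      using 1 i by (auto simp: inner_texts_iff take_map intro!: exI[of _ "take j a"] dest: in_set_takeD)
  next
    case (2 a)
    then have "j \<le> length a" using assms(3) i by simp
    moreover have "j < length a \<Longrightarrow> a ! j \<in> A" using 2 nth_mem by blast
    ultimately show ?thesis
      using 2 i by (auto simp: inner_texts_iff take_map nth_append intro!: exI[of _ "take j a"] dest: in_set_takeD)
  qed
qed

lemma snoc_in_texts:
  assumes "x \<in> inner_texts A N" "s \<in> Sym ` A \<union> {Dag}"
  shows "x @ [s] \<in> texts A N"
proof -
  obtain a where a: "set a \<subseteq> A" "length a < N - 1" "x = Bot # map Sym a"
    using assms(1) by (auto simp: inner_texts_iff)
  show ?thesis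
  proof (cases "s = Dag")
    case True
    then show ?thesis using a by (auto simp: texts_def finished_texts_def lists_eq_set)
  next
    case False
    then obtain b where "s = Sym b" "b \<in> A" using assms(2) by auto
    then have "x @ [s] = Bot # map Sym (a @ [b])" "set (a @ [b]) \<subseteq> A" "length (a @ [b]) \<le> N - 1"
      using a by auto
    then show ?thesis unfolding texts_def unfinished_texts_def lists_eq_set by blast
  qed
qed

lemma snoc_in_textsD:
  assumes "x @ [s] \<in> texts A N" "x \<noteq> []"
  shows "x \<in> inner_texts A N" "s \<in> Sym ` A \<union> {Dag}"
  using take_in_inner_texts[OF assms(1), of "length x"] assms(2) by simp_all

lemma children_inner_texts:
  "x \<in> inner_texts A N \<Longrightarrow> children (texts A N) x = (\<lambda>s. x @ [s]) ` (Sym ` A \<union> {Dag})"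
  using snoc_in_texts snoc_in_textsD(2) by (fastforce simp: children_def inner_texts_iff)

lemma children_texts_eq_empty:
  "x \<in> texts A N \<Longrightarrow> x \<notin> inner_texts A N \<Longrightarrow> children (texts A N) x = {}"
  using snoc_in_textsD(1) texts_nonempty by (fastforce simp: children_def)

lemma texts_prefix_convex:
  assumes "x \<in> texts A N" "z \<in> texts A N" "prefix x y" "prefix y z"
  shows "y \<in> texts A N"
proof (cases "y = z")
  case False
  have "y = take (length y) z" using assms(4) by (metis append_eq_conv_conj prefix_def)
  moreover have "0 < length y" using assms(1,3) texts_nonempty by (cases y) auto
  moreover have "length y < length z" using assms(4) False prefix_length_less strict_prefixI by blast
  ultimately have "y \<in> inner_texts A N" using take_in_inner_texts[OF assms(2)] by metis
  then show ?thesis by (simp add: inner_texts_def texts_def)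
qed (use assms in simp)

lemma Tbot_subset_texts: "Tbot A N \<subseteq> texts A N"
  by (auto simp: Tbot_def texts_def)

lemma texts_diff_Tbot:
  assumes "N \<ge> 1"
  shows "texts A N - Tbot A N = inner_texts A N"
  using assms by (auto simp: texts_def Tbot_def inner_texts_def unfinished_texts_def
      finished_texts_def map_eq_append_conv)

lemma piT_refl: "piT p x x = 1"
  by (simp add: piT_def)

lemma piT_not_prefix: "\<not> prefix x y \<Longrightarrow> piT p y x = 0"
  by (auto simp: piT_def)

lemma piT_snoc: "piT p (x @ [s]) x = p x s"
  by (simp add: piT_def)

lemma piT_trans:
  assumes "prefix x y" "prefix y z"
  shows "piT p z x = piT p y x * piT p z y"
proof (cases "x = y \<or> y = z")
  case False
  obtain zs where zs: "z = y @ zs" using assms(2) prefixE by blast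
  have lengths: "length x \<le> length y" "length y \<le> length z"
    using assms prefix_length_le by auto
  have "(\<Prod>i\<in>{length x..<length z}. p (take i z) (z ! i))
      = (\<Prod>i\<in>{length x..<length y}. p (take i z) (z ! i)) * (\<Prod>i\<in>{length y..<length z}. p (take i z) (z ! i))"
    using lengths by (simp add: prod.atLeastLessThan_concat)
  also have "(\<Prod>i\<in>{length x..<length y}. p (take i z) (z ! i)) = (\<Prod>i\<in>{length x..<length y}. p (take i y) (y ! i))"
    by (rule prod.cong) (auto simp: zs nth_append)
  finally show ?thesis using False assms by (auto simp: piT_def)
qed (auto simp: piT_refl)

lemma piT_texts_nonneg:
  assumes "x \<in> texts A N" "z \<in> texts A N"
    and "\<And>x s. x \<in> inner_texts A N \<Longrightarrow> s \<in> Sym ` A \<union> {Dag} \<Longrightarrow> 0 \<le> p x s"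
  shows "0 \<le> piT p z x"
proof -
  have "0 \<le> p (take i z) (z ! i)" if "i \<in> {length x..<length z}" for i
  proof -
    have "0 < i" using that texts_nonempty[OF assms(1)] by (cases x) auto
    then show ?thesis using that assms(3) take_in_inner_texts[OF assms(2)] by simp
  qed
  then show ?thesis unfolding piT_def by (auto intro: prod_nonneg)
qed

lemma zeta_t_eq_powr:
  assumes "0 \<le> piT p y x"
  shows "zeta_t p t x y = piT p y x powr t"
  using assms by (auto simp: zeta_t_def dist_text_def powr_def)

lemma zeta_t_snoc: "0 \<le> p x s \<Longrightarrow> zeta_t p t x (x @ [s]) = p x s powr t"
  by (simp add: zeta_t_eq_powr piT_snoc)

lemma prefix_zeta_texts:
  assumes "finite A"
    and "\<And>x s. x \<in> inner_texts A N \<Longrightarrow> s \<in> Sym ` A \<union> {Dag} \<Longrightarrow> 0 \<le> p x s"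
  shows "prefix_zeta (texts A N) (zeta_t p t)"
proof
  have nonneg: "0 \<le> piT p z x" if "x \<in> texts A N" "z \<in> texts A N" for x z
    using that assms(2) by (rule piT_texts_nonneg)
  show "finite (texts A N)" using assms(1) by (rule finite_texts)
  show "y \<in> texts A N" if "x \<in> texts A N" "z \<in> texts A N" "prefix x y" "prefix y z" for x y z
    using that by (rule texts_prefix_convex)
  show "zeta_t p t x x = 1" for x
    by (simp add: zeta_t_eq_powr piT_refl)
  show "zeta_t p t x z = 0" if "\<not> prefix x z" for x z
    using that by (simp add: zeta_t_eq_powr piT_not_prefix)
  show "zeta_t p t x z = zeta_t p t x y * zeta_t p t y z"
    if "x \<in> texts A N" "y \<in> texts A N" "z \<in> texts A N" "prefix x y" "prefix y z" for x y z
    using nonneg[OF that(1,2)] nonneg[OF that(2,3)] nonneg[OF that(1,3)] piT_trans[OF that(4,5), of p]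
    by (simp add: zeta_t_eq_powr powr_mult)
qed

lemma t_minus_one_mult_tsallis:
  assumes "\<And>i. i \<in> S \<Longrightarrow> 0 \<le> q i" "sum q S = 1"
  shows "(t - 1) * tsallis t S q = 1 - (\<Sum>i\<in>S. q i powr t)"
proof (cases "t = 1")
  case True
  then show ?thesis using assms by simp
qed (simp add: tsallis_def)

lemma one_minus_sum_children_texts:
  assumes "x \<in> inner_texts A N"
    and "\<And>s. s \<in> Sym ` A \<union> {Dag} \<Longrightarrow> 0 \<le> p x s" "sum (p x) (Sym ` A \<union> {Dag}) = 1"
  shows "1 - (\<Sum>y\<in>children (texts A N) x. zeta_t p t x y) = (t - 1) * tsallis t (Sym ` A \<union> {Dag}) (p x)"
proof -
  have "(\<Sum>y\<in>children (texts A N) x. zeta_t p t x y) = (\<Sum>s\<in>Sym ` A \<union> {Dag}. zeta_t p t x (x @ [s]))"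
    unfolding children_inner_texts[OF assms(1)]
    by (rule sum.reindex_cong[where l = "\<lambda>s. x @ [s]"]) (auto simp: inj_on_def)
  also have "\<dots> = (\<Sum>s\<in>Sym ` A \<union> {Dag}. p x s powr t)"
    using assms(2) by (intro sum.cong) (simp_all add: zeta_t_snoc)
  finally show ?thesis
    using t_minus_one_mult_tsallis[OF assms(2,3)] by simp
qed

theorem proposition3p9:
  fixes A :: "'a set" and N :: nat and p :: "'a sym list \<Rightarrow> 'a sym \<Rightarrow> real" and t :: real
  assumes "finite A"
    and "N \<ge> 1"
    and "\<And>x s. x \<in> unfinished_texts A N \<Longrightarrow> length x \<le> N - 1 \<Longrightarrow>
                 s \<in> Sym ` A \<union> {Dag} \<Longrightarrow> p x s \<ge> 0"
    and "\<And>x. x \<in> unfinished_texts A N \<Longrightarrow> length x \<le> N - 1 \<Longrightarrow>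
               (\<Sum>s\<in>Sym ` A \<union> {Dag}. p x s) = 1"
    and "t > 0"
  shows "magnitude (texts A N) (zeta_t p t) =
           (t - 1) * (\<Sum>x\<in>texts A N - Tbot A N. tsallis t (Sym ` A \<union> {Dag}) (p x))
           + real (card (Tbot A N))"
proof -
  let ?B = "Sym ` A \<union> {Dag}"
  have nonneg: "\<And>s. s \<in> ?B \<Longrightarrow> 0 \<le> p x s" and sum_one: "sum (p x) ?B = 1"
    if "x \<in> inner_texts A N" for x
    using that assms(3,4) by (auto simp: inner_texts_def)
  interpret prefix_zeta "texts A N" "zeta_t p t"
    using assms(1) nonneg by (rule prefix_zeta_texts)
  have inner: "texts A N - Tbot A N = inner_texts A N"
    using assms(2) by (rule texts_diff_Tbot)
  have leaf: "x \<in> texts A N" "x \<notin> inner_texts A N" if "x \<in> Tbot A N" for x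
    using that inner Tbot_subset_texts by blast+
  let ?node = "\<lambda>x. 1 - (\<Sum>y\<in>children (texts A N) x. zeta_t p t x y)"
  have "magnitude (texts A N) (zeta_t p t) = (\<Sum>x\<in>texts A N - Tbot A N. ?node x) + (\<Sum>x\<in>Tbot A N. ?node x)"
    using magnitude_eq sum.subset_diff[OF Tbot_subset_texts finite_texts[OF assms(1)]] by simp
  also have "(\<Sum>x\<in>texts A N - Tbot A N. ?node x) = (\<Sum>x\<in>texts A N - Tbot A N. (t - 1) * tsallis t ?B (p x))"
    using one_minus_sum_children_texts[OF _ nonneg sum_one] inner by (intro sum.cong) auto
  also have "(\<Sum>x\<in>Tbot A N. ?node x) = card (Tbot A N)"
    by (simp add: leaf children_texts_eq_empty)
  finally show ?thesis by (simp add: sum_distrib_left)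
qed

end
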